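(* Let $f:(\mathbb R^2,0)\to(\mathbb R^3,0)$ be a smooth germ of the form $f(u,v)=(u,f_2(u,v),f_3(u,v))$ with $$j^2f(0)=\Big(u,\tfrac12(a_{20}u^2+2a_{11}uv+a_{02}v^2),\tfrac12(b_{20}u^2+2b_{11}uv+b_{02}v^2)\Big),$$ and let $p=0\in M=f(\mathbb R^2)$. Suppose the curvature parabola $\Delta_p$ is a non-degenerate parabola or a half-line. Then $$\kappa_a(p)=\frac{1}{\sqrt{a_{02}^2+b_{02}^2}}\Big((a_{20}a_{02}+b_{20}b_{02})-\frac{(a_{11}a_{02}+b_{11}b_{02})^2}{a_{02}^2+b_{02}^2}\Big).$$
   Context: For such $f$, the normal plane $N_pM$ is the $(y,z)$-coordinate plane and the curvature parabola $\Delta_p$ is parametrized by $\eta(y)=(0,a_{20}+2a_{11}y+a_{02}y^2,\,b_{20}+2b_{11}y+b_{02}y^2)$, $y\in\mathbb R$ (this is the image of the unit vectors $\partial_u+y\partial_v$ of the first fundamental form under $X\mapsto II(X,X)$, where $II$ is the normal projection of the second derivatives of $f$). It is a non-degenerate parabola, a half-line, a line, or a point. Axial vector $v_a$: if $\Delta_p$ is a non-degenerate parabola, $v_a$ is the unit vector along its axis of symmetry pointing towards its interior (orthogonal to the directrix direction $v_d$, with $\{v_a,v_d\}$ positively oriented); if $\Delta_p$ is a half-line, $v_a$ is the unit vector in the direction $\eta'(y)/|\eta'(y)|$ for $y>0$ with $\eta'(y)\ne0$. The axial curvature is $\kappa_a(p)=\min_{y\in\mathbb R}\langle\eta(y),v_a\rangle$.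 *)

theory Defs
  imports "HOL-Analysis.Analysis"
begin

text \<open>The normal plane N_pM is identified with the (y,z)-coordinate plane, modelled
  as real \<times> real (with its standard inner product).\<close>

definition curv_eta :: "real \<Rightarrow> real \<Rightarrow> real \<Rightarrow> real \<Rightarrow> real \<Rightarrow> real \<Rightarrow> real \<Rightarrow> real \<times> real" where
  "curv_eta a20 a11 a02 b20 b11 b02 y =
     (a20 + 2*a11*y + a02*y^2, b20 + 2*b11*y + b02*y^2)"

definition curv_parabola :: "real \<Rightarrow> real \<Rightarrow> real \<Rightarrow> real \<Rightarrow> real \<Rightarrow> real \<Rightarrow> (real \<times> real) set" where
  "curv_parabola a20 a11 a02 b20 b11 b02 = range (curv_eta a20 a11 a02 b20 b11 b02)"

definition parabola_data :: "(real \<times> real) set \<Rightarrow> real \<times> real \<Rightarrow> real \<times> real \<Rightarrow> real \<times> real \<Rightarrow> bool" where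
  "parabola_data S F q d \<longleftrightarrow> d \<noteq> 0 \<and> F \<notin> {q + t *\<^sub>R d | t. True} \<and>
     S = {x. dist x F = infdist x {q + t *\<^sub>R d | t. True}}"

definition nondeg_parabola :: "(real \<times> real) set \<Rightarrow> bool" where
  "nondeg_parabola S \<longleftrightarrow> (\<exists>F q d. parabola_data S F q d)"

definition half_line :: "(real \<times> real) set \<Rightarrow> bool" where
  "half_line S \<longleftrightarrow> (\<exists>x0 v. v \<noteq> 0 \<and> S = {x0 + t *\<^sub>R v | t. t \<ge> 0})"

definition axial_vector :: "(real \<times> real) set \<Rightarrow> real \<times> real" where
  "axial_vector S =
    (if nondeg_parabola S then
       (THE v. norm v = 1 \<and> (\<exists>F q d. parabola_data S F q d \<and> inner v d = 0 \<and> inner (F - q) v > 0))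
     else
       (THE v. norm v = 1 \<and> (\<exists>x0. S = {x0 + t *\<^sub>R v | t. t \<ge> 0})))"

definition axial_curvature :: "real \<Rightarrow> real \<Rightarrow> real \<Rightarrow> real \<Rightarrow> real \<Rightarrow> real \<Rightarrow> real" where
  "axial_curvature a20 a11 a02 b20 b11 b02 =
    (let eta = curv_eta a20 a11 a02 b20 b11 b02;
         va = axial_vector (curv_parabola a20 a11 a02 b20 b11 b02)
     in THE m. (\<exists>y. m = inner (eta y) va) \<and> (\<forall>y. m \<le> inner (eta y) va))"

end

theory Submission
  imports Defs "HOL-Computational_Algebra.Polynomial"
begin

(* Write c = (a02, b02), A = a20 a02 + b20 b02 and B = a11 a02 + b11 b02. Then
   <eta(y), c> = A + 2 B y + |c|^2 y^2, whose minimum is A - B^2/|c|^2, so everything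
   reduces to showing that c is nonzero and that the axial vector is c/|c|.
   For a half-line, eta is affine in (y + beta)^2 with beta = B/|c|^2, so its direction is c.
   For a non-degenerate parabola with focus F and directrix q + t d, inserting eta(y) into
   the focus-directrix equation gives a polynomial identity in y: the y^4 coefficient
   forces <c, d> = 0, and the y^2 coefficient gives |d|^2 <F - q, c> = 2 <(a11, b11), d>^2,
   which is positive because otherwise the curvature parabola would be a single point. *)

lemma quartic_identically_zero:
  fixes c0 c1 c2 c3 c4 :: real
  assumes "\<forall>y. c0 + c1*y + c2*y^2 + c3*y^3 + c4*y^4 = 0"
  shows "c0 = 0 \<and> c1 = 0 \<and> c2 = 0 \<and> c3 = 0 \<and> c4 = 0"
proof -
  have "poly [:c0, c1, c2, c3, c4:] y = c0 + c1*y + c2*y^2 + c3*y^3 + c4*y^4" for y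
    by (simp add: algebra_simps eval_nat_numeral)
  then have "[:c0, c1, c2, c3, c4:] = 0"
    using assms poly_all_0_iff_0 by (metis (no_types, lifting))
  then show ?thesis by simp
qed

lemma the_min_quadratic:
  fixes A B K N :: real
  assumes K: "K > 0" and N: "N > 0"
  shows "(THE m. (\<exists>y. m = (A + 2*B*y + K*y^2) / N) \<and> (\<forall>y. m \<le> (A + 2*B*y + K*y^2) / N))
         = (A - B^2/K) / N"
proof (rule the_equality)
  have square: "A + 2*B*y + K*y^2 = (A - B^2/K) + K*(y + B/K)^2" for y
    using K by (simp add: field_simps power2_eq_square)
  have lower: "(A - B^2/K) / N \<le> (A + 2*B*y + K*y^2) / N" for y
    unfolding square using K N by (simp add: divide_right_mono)
  have attained: "(A - B^2/K) / N = (A + 2*B*(-B/K) + K*(-B/K)^2) / N"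
    unfolding square by simp
  with lower show "(\<exists>y. (A - B^2/K) / N = (A + 2*B*y + K*y^2) / N)
      \<and> (\<forall>y. (A - B^2/K) / N \<le> (A + 2*B*y + K*y^2) / N)" by blast
  fix m assume m: "(\<exists>y. m = (A + 2*B*y + K*y^2) / N) \<and> (\<forall>y. m \<le> (A + 2*B*y + K*y^2) / N)"
  then have "m \<le> (A - B^2/K) / N" using attained by metis
  moreover have "(A - B^2/K) / N \<le> m" using m lower by auto
  ultimately show "m = (A - B^2/K) / N" by simp
qed

lemma inner_sgn_right: "inner x (sgn y) = inner x y / norm y"
  for x y :: "'a::real_inner"
  by (simp add: sgn_div_norm divide_inverse_commute)

lemma orthogonal_unit_vector_eq_sgn:
  fixes u c d p :: "real \<times> real"
  assumes d: "d \<noteq> 0" and ud: "inner u d = 0" and cd: "inner c d = 0"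
    and pu: "inner p u > 0" and pc: "inner p c > 0" and u: "norm u = 1"
  shows "u = sgn c"
proof -
  obtain u1 u2 c1 c2 d1 d2 where coords: "u = (u1,u2)" "c = (c1,c2)" "d = (d1,d2)"
    by (cases u, cases c, cases d) auto
  have "d1 * (u1*c2 - u2*c1) = 0" "d2 * (u1*c2 - u2*c1) = 0"
    using ud cd unfolding coords by (simp_all add: algebra_simps) algebra+
  then have "u1*c2 = u2*c1" using d coords by (auto simp: zero_prod_def)
  then have "(norm c)^2 *\<^sub>R u = inner u c *\<^sub>R c"
    unfolding coords by (simp add: norm_Pair algebra_simps power2_eq_square)
  moreover have "c \<noteq> 0" using pc by auto
  ultimately obtain s where u_eq: "u = s *\<^sub>R c"
    by (metis (no_types, lifting) divideR_right norm_eq_zero power_not_zero scaleR_scaleR)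
  have "s > 0"
    using pu pc unfolding u_eq by (simp add: zero_less_mult_iff)
  then have "s * norm c = 1" using u unfolding u_eq by simp
  then have "s = 1 / norm c" using pc by (auto simp: eq_divide_eq)
  then show ?thesis unfolding u_eq sgn_div_norm by (simp add: divide_inverse_commute)
qed

lemma half_line_ne_line:
  fixes x0 v p w :: "'a::real_vector"
  assumes "v \<noteq> 0"
  shows "{x0 + t *\<^sub>R v | t. t \<ge> 0} \<noteq> range (\<lambda>y. p + y *\<^sub>R w)"
proof
  assume E: "{x0 + t *\<^sub>R v | t. t \<ge> 0} = range (\<lambda>y. p + y *\<^sub>R w)"
  have "x0 + 0 *\<^sub>R v \<in> range (\<lambda>y. p + y *\<^sub>R w)" "x0 + 1 *\<^sub>R v \<in> range (\<lambda>y. p + y *\<^sub>R w)"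
    unfolding E[symmetric] by (blast intro: zero_le_one order.refl)+
  then obtain y0 y1 where y0: "x0 = p + y0 *\<^sub>R w" and y1: "x0 + v = p + y1 *\<^sub>R w"
    by (metis (no_types, lifting) add_0_right rangeE scale_one scale_zero_left)
  then have v_eq: "v = (y1 - y0) *\<^sub>R w" by (simp add: algebra_simps)
  have "x0 - v = p + (2*y0 - y1) *\<^sub>R w" unfolding v_eq y0 by (simp add: algebra_simps flip: scaleR_2)
  then have "x0 - v \<in> range (\<lambda>y. p + y *\<^sub>R w)" by auto
  then obtain t where "t \<ge> 0" "x0 - v = x0 + t *\<^sub>R v" unfolding E[symmetric] by auto
  then have "(1 + t) *\<^sub>R v = 0" by (simp add: algebra_simps)
  with \<open>t \<ge> 0\<close> \<open>v \<noteq> 0\<close> show False by simp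
qed

lemma half_line_unit_direction_unique:
  fixes p p' w w' :: "'a::real_normed_vector"
  assumes E: "{p + t *\<^sub>R w | t. t \<ge> 0} = {p' + t *\<^sub>R w' | t. t \<ge> 0}"
    and n: "norm w = 1" "norm w' = 1"
  shows "w' = w"
proof -
  have mem: "\<exists>t. p' + s *\<^sub>R w' = p + t *\<^sub>R w \<and> t \<ge> 0" if "s \<ge> 0" for s
  proof -
    have "p' + s *\<^sub>R w' \<in> {p' + t *\<^sub>R w' | t. t \<ge> 0}" using that by blast
    then show ?thesis unfolding E[symmetric] by blast
  qed
  obtain t0 where t0: "p' = p + t0 *\<^sub>R w" using mem[of 0] by auto
  obtain t1 where t1: "p' + w' = p + t1 *\<^sub>R w" using mem[of 1] by auto
  have w': "w' = (t1 - t0) *\<^sub>R w" using t0 t1 by (simp add: algebra_simps)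
  then have "\<bar>t1 - t0\<bar> = 1" using n by simp
  moreover have "t1 - t0 \<noteq> -1"
  proof
    assume "t1 - t0 = -1"
    then have "w' = - w" using w' by simp
    obtain t2 where "t2 \<ge> 0" and "p' + (\<bar>t0\<bar> + 1) *\<^sub>R w' = p + t2 *\<^sub>R w"
      using mem[of "\<bar>t0\<bar> + 1"] by auto
    then have "(t2 + \<bar>t0\<bar> + 1 - t0) *\<^sub>R w = 0" and "t2 + \<bar>t0\<bar> + 1 - t0 > 0"
      using t0 \<open>w' = - w\<close> by (auto simp: algebra_simps)
    then show False using n by simp
  qed
  ultimately have "t1 - t0 = 1" by arith
  then show ?thesis using w' by simp
qed

lemma infdist_Pair_line:
  fixes x1 x2 q1 q2 d1 d2 :: real
  assumes "(d1,d2) \<noteq> 0"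
  shows "infdist (x1,x2) {(q1,q2) + t *\<^sub>R (d1,d2) | t. True}
         = sqrt (((x1-q1)*d2 - (x2-q2)*d1)^2 / (d1^2+d2^2))"
proof -
  let ?L = "{(q1,q2) + t *\<^sub>R (d1,d2) | t. True}"
  define D where "D = d1^2+d2^2"
  have D: "D > 0" using assms by (auto simp: D_def sum_power2_gt_zero_iff zero_prod_def)
  define c where "c = (x1-q1)*d2 - (x2-q2)*d1"
  define E where "E t = (x1 - (q1 + t*d1))^2 + (x2 - (q2+t*d2))^2" for t
  have lagrange: "E t * D = ((x1-q1)*d1 + (x2-q2)*d2 - t*D)^2 + c^2" for t
    unfolding E_def D_def c_def by algebra
  have dist: "dist (x1,x2) ((q1,q2) + t *\<^sub>R (d1,d2)) = sqrt (E t)" for t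
    by (simp add: dist_Pair_Pair dist_real_def E_def)
  have lower: "sqrt (c^2/D) \<le> dist (x1,x2) ((q1,q2) + t *\<^sub>R (d1,d2))" for t
  proof -
    have "c^2 \<le> E t * D" using lagrange[of t] by simp
    then have "c^2/D \<le> E t" using D by (simp add: pos_divide_le_eq)
    then show ?thesis unfolding dist by (rule real_sqrt_le_mono)
  qed
  define t0 where "t0 = ((x1-q1)*d1 + (x2-q2)*d2)/D"
  have "E t0 * D = c^2" using lagrange[of t0] D by (simp add: t0_def)
  then have attained: "dist (x1,x2) ((q1,q2) + t0 *\<^sub>R (d1,d2)) = sqrt (c^2/D)"
    using D dist by (simp add: eq_divide_eq)
  have nonempty: "?L \<noteq> {}" by blast
  then have "sqrt (c^2/D) \<le> infdist (x1,x2) ?L"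
    unfolding infdist_notempty[OF nonempty] by (rule cINF_greatest) (use lower in auto)
  moreover have "infdist (x1,x2) ?L \<le> sqrt (c^2/D)"
    using infdist_le[of "(q1,q2) + t0 *\<^sub>R (d1,d2)" ?L "(x1,x2)"] attained by auto
  ultimately show ?thesis unfolding c_def D_def by simp
qed

lemma parabola_data_mem_iff:
  fixes x1 x2 f1 f2 q1 q2 d1 d2 :: real
  assumes "parabola_data S (f1,f2) (q1,q2) (d1,d2)"
  shows "(x1,x2) \<in> S \<longleftrightarrow>
         ((x1-f1)^2 + (x2-f2)^2) * (d1^2+d2^2) = ((x1-q1)*d2 - (x2-q2)*d1)^2"
proof -
  have d: "(d1,d2) \<noteq> 0" using assms by (simp add: parabola_data_def)
  then have D: "d1^2+d2^2 > 0" by (auto simp: sum_power2_gt_zero_iff zero_prod_def)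
  have "(x1,x2) \<in> S \<longleftrightarrow>
      sqrt ((x1-f1)^2 + (x2-f2)^2) = sqrt (((x1-q1)*d2 - (x2-q2)*d1)^2 / (d1^2+d2^2))"
    using assms infdist_Pair_line[OF d, of x1 x2 q1 q2]
    by (simp add: parabola_data_def dist_Pair_Pair dist_real_def)
  also have "\<dots> \<longleftrightarrow> (x1-f1)^2 + (x2-f2)^2 = ((x1-q1)*d2 - (x2-q2)*d1)^2 / (d1^2+d2^2)"
    by simp
  also have "\<dots> \<longleftrightarrow> ((x1-f1)^2 + (x2-f2)^2) * (d1^2+d2^2) = ((x1-q1)*d2 - (x2-q2)*d1)^2"
    using D by (intro nonzero_eq_divide_eq) auto
  finally show ?thesis .
qed

lemma parabola_data_focus_off_directrix:
  fixes f1 f2 q1 q2 d1 d2 :: real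
  assumes "parabola_data S (f1,f2) (q1,q2) (d1,d2)"
  shows "(f1-q1)*d2 - (f2-q2)*d1 \<noteq> 0"
proof
  assume h: "(f1-q1)*d2 - (f2-q2)*d1 = 0"
  define D where "D = d1^2+d2^2"
  have "(d1,d2) \<noteq> 0" using assms by (simp add: parabola_data_def)
  then have D: "D > 0" by (auto simp: sum_power2_gt_zero_iff zero_prod_def D_def)
  define t0 where "t0 = ((f1-q1)*d1 + (f2-q2)*d2)/D"
  have "(f1-q1)*D = ((f1-q1)*d1 + (f2-q2)*d2)*d1" "(f2-q2)*D = ((f1-q1)*d1 + (f2-q2)*d2)*d2"
    using h unfolding D_def by algebra+
  then have "(f1,f2) = (q1,q2) + t0 *\<^sub>R (d1,d2)"
    using D by (simp add: t0_def field_simps)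
  then show False using assms by (auto simp: parabola_data_def)
qed

lemma parabola_data_not_singleton:
  assumes "parabola_data S F q d"
  shows "S \<noteq> {x}"
proof
  assume S: "S = {x}"
  obtain f1 f2 q1 q2 d1 d2 where coords: "F = (f1,f2)" "q = (q1,q2)" "d = (d1,d2)"
    by (cases F, cases q, cases d) auto
  define D where "D = d1^2+d2^2"
  define h where "h = (f1-q1)*d2 - (f2-q2)*d1"
  have "(d1,d2) \<noteq> 0" using assms coords by (simp add: parabola_data_def)
  then have D: "D > 0" by (auto simp: sum_power2_gt_zero_iff zero_prod_def D_def)
  have h: "h \<noteq> 0"
    using parabola_data_focus_off_directrix assms coords by (simp add: h_def)
  \<comment> \<open>\<open>u\<close> is chosen so that both points \<open>F \<plusminus> d + u d\<^sup>\<bottom>\<close> lie on the parabola\<close>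
  define u where "u = (D^2 - h^2)/(2*h*D)"
  have u: "2*h*u*D = D^2 - h^2" using h D by (simp add: u_def field_simps)
  have "(f1 + s*d1 + u*d2, f2 + s*d2 - u*d1) \<in> S" if "s^2 = 1" for s
  proof -
    have "((f1 + s*d1 + u*d2 - f1)^2 + (f2 + s*d2 - u*d1 - f2)^2) * D
        = ((f1 + s*d1 + u*d2 - q1)*d2 - (f2 + s*d2 - u*d1 - q2)*d1)^2"
      using u that unfolding D_def h_def by algebra
    then show ?thesis using parabola_data_mem_iff assms coords D_def by metis
  qed
  from this[of 1] this[of "-1"] have "d1 = -d1" "d2 = -d2" unfolding S by auto
  then show False using \<open>(d1,d2) \<noteq> 0\<close> by (simp add: zero_prod_def)
qed

lemma curv_parabola_focus_directrix_identities:
  fixes f1 f2 q1 q2 d1 d2 :: real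
  assumes P: "parabola_data (curv_parabola a20 a11 a02 b20 b11 b02) (f1,f2) (q1,q2) (d1,d2)"
  defines "h \<equiv> (f1-q1)*d2 - (f2-q2)*d1"
  shows "a02*d1 + b02*d2 = 0"
    and "(a02*d2 - b02*d1) * h = 2 * (a11*d1 + b11*d2)^2"
    and "((a20-f1)*d1 + (b20-f2)*d2) * (a11*d1 + b11*d2) = h * (a11*d2 - b11*d1)"
proof -
  define D where "D = d1^2+d2^2"
  define p1 where "p1 = a20 - f1"
  define p2 where "p2 = b20 - f2"
  define Q where "Q = (a20-q1)*d2 - (b20-q2)*d1"
  define bn where "bn = a11*d2 - b11*d1"
  define cn where "cn = a02*d2 - b02*d1"
  define c0 where "c0 = D*(p1^2+p2^2) - Q^2"
  define c1 where "c1 = 4*(D*(p1*a11+p2*b11) - Q*bn)"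
  define c2 where "c2 = D*(4*(a11^2+b11^2) + 2*(p1*a02+p2*b02)) - 4*bn^2 - 2*Q*cn"
  define c3 where "c3 = 4*(D*(a11*a02+b11*b02) - bn*cn)"
  define c4 where "c4 = D*(a02^2+b02^2) - cn^2"
  \<comment> \<open>the focus-directrix equation evaluated along \<open>curv_eta\<close> is a quartic in \<open>y\<close>\<close>
  have "c0 + c1*y + c2*y^2 + c3*y^3 + c4*y^4 = 0" for y
  proof -
    have "(a20 + 2*a11*y + a02*y^2, b20 + 2*b11*y + b02*y^2) \<in> curv_parabola a20 a11 a02 b20 b11 b02"
      unfolding curv_parabola_def curv_eta_def by blast
    then have "((a20 + 2*a11*y + a02*y^2 - f1)^2 + (b20 + 2*b11*y + b02*y^2 - f2)^2) * D
       = ((a20 + 2*a11*y + a02*y^2 - q1)*d2 - (b20 + 2*b11*y + b02*y^2 - q2)*d1)^2"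
      using parabola_data_mem_iff[OF P] D_def by blast
    moreover have "((a20 + 2*a11*y + a02*y^2 - f1)^2 + (b20 + 2*b11*y + b02*y^2 - f2)^2) * D
       - ((a20 + 2*a11*y + a02*y^2 - q1)*d2 - (b20 + 2*b11*y + b02*y^2 - q2)*d1)^2
       = c0 + c1*y + c2*y^2 + c3*y^3 + c4*y^4"
      unfolding c0_def c1_def c2_def c3_def c4_def p1_def p2_def Q_def bn_def cn_def by algebra
    ultimately show ?thesis by simp
  qed
  then have coeffs: "c0 = 0" "c1 = 0" "c2 = 0" "c3 = 0" "c4 = 0"
    using quartic_identically_zero by blast+
  have "(a02*d1 + b02*d2)^2 = 0"
    using coeffs(5) unfolding c4_def cn_def D_def by algebra
  then show cd: "a02*d1 + b02*d2 = 0" by simp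
  show "(a02*d2 - b02*d1) * h = 2 * (a11*d1 + b11*d2)^2"
    using coeffs(3) cd unfolding c2_def cn_def D_def bn_def h_def p1_def p2_def Q_def by algebra
  show "((a20-f1)*d1 + (b20-f2)*d2) * (a11*d1 + b11*d2) = h * (a11*d2 - b11*d1)"
    using coeffs(2) unfolding c1_def D_def bn_def h_def p1_def p2_def Q_def by algebra
qed

lemma curv_parabola_data_axis:
  assumes P: "parabola_data (curv_parabola a20 a11 a02 b20 b11 b02) F q d"
  shows "inner (a02,b02) d = 0" and "inner (F - q) (a02,b02) > 0"
proof -
  obtain f1 f2 q1 q2 d1 d2 where coords: "F = (f1,f2)" "q = (q1,q2)" "d = (d1,d2)"
    by (cases F, cases q, cases d) auto
  note P' = P[unfolded coords]
  define D where "D = d1^2+d2^2"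
  define h where "h = (f1-q1)*d2 - (f2-q2)*d1"
  have "(d1,d2) \<noteq> 0" using P' by (simp add: parabola_data_def)
  then have D: "D > 0" by (auto simp: sum_power2_gt_zero_iff zero_prod_def D_def)
  have h: "h \<noteq> 0" using parabola_data_focus_off_directrix[OF P'] by (simp add: h_def)
  note identities = curv_parabola_focus_directrix_identities[OF P', folded h_def]
  have lagrange: "D*(x^2+y^2) = (x*d1 + y*d2)^2 + (x*d2 - y*d1)^2" for x y :: real
    unfolding D_def by algebra
  have "a11*d1 + b11*d2 \<noteq> 0"
  proof
    assume bd: "a11*d1 + b11*d2 = 0"
    then have "a11*d2 - b11*d1 = 0" using identities(3) h by simp
    then have "a11^2 + b11^2 = 0" using lagrange[of a11 b11] bd D by simp
    moreover have "a02*d2 - b02*d1 = 0" using identities(2) bd h by simp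
    then have "a02^2 + b02^2 = 0" using lagrange[of a02 b02] identities(1) D by simp
    ultimately have "curv_parabola a20 a11 a02 b20 b11 b02 = {(a20,b20)}"
      by (auto simp: sum_power2_eq_zero_iff curv_parabola_def curv_eta_def)
    then show False using parabola_data_not_singleton[OF P] by blast
  qed
  then have "h * (a02*d2 - b02*d1) > 0" using identities(2) by (simp add: mult.commute)
  moreover have "D * ((f1-q1)*a02 + (f2-q2)*b02) = h * (a02*d2 - b02*d1)"
    using identities(1) unfolding D_def h_def by algebra
  ultimately have "(f1-q1)*a02 + (f2-q2)*b02 > 0" using D by (metis zero_less_mult_pos)
  then show "inner (F - q) (a02,b02) > 0" using coords by simp
  show "inner (a02,b02) d = 0" using identities(1) coords by simp
qed

lemma curv_parabola_half_line_coeffs: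
  assumes H: "half_line (curv_parabola a20 a11 a02 b20 b11 b02)"
  shows "(a02,b02) \<noteq> 0" and "a11*b02 = b11*a02"
proof -
  let ?S = "curv_parabola a20 a11 a02 b20 b11 b02"
  obtain x0 v where v: "v \<noteq> 0" and S: "?S = {x0 + t *\<^sub>R v | t. t \<ge> 0}"
    using H by (auto simp: half_line_def)
  obtain x1 x2 w1 w2 where coords: "x0 = (x1,x2)" "v = (w1,w2)" by (cases x0, cases v)
  have "\<forall>y. ((a20-x1)*w2 - (b20-x2)*w1) + (2*(a11*w2 - b11*w1))*y + (a02*w2 - b02*w1)*y^2
        + 0*y^3 + 0*y^4 = 0"
  proof
    fix y
    have "curv_eta a20 a11 a02 b20 b11 b02 y \<in> ?S" by (simp add: curv_parabola_def)
    then obtain t where "a20 + 2*a11*y + a02*y^2 = x1 + t*w1" "b20 + 2*b11*y + b02*y^2 = x2 + t*w2"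
      unfolding S coords curv_eta_def by auto
    then show "((a20-x1)*w2 - (b20-x2)*w1) + (2*(a11*w2 - b11*w1))*y + (a02*w2 - b02*w1)*y^2
        + 0*y^3 + 0*y^4 = 0" by algebra
  qed
  from quartic_identically_zero[OF this] have cross: "a11*w2 = b11*w1" "a02*w2 = b02*w1"
    by simp_all
  show "(a02,b02) \<noteq> 0"
  proof
    assume "(a02,b02) = 0"
    then have "?S = range (\<lambda>y. (a20,b20) + y *\<^sub>R (2*a11, 2*b11))"
      by (auto simp: curv_parabola_def curv_eta_def zero_prod_def)
    moreover have "{x0 + t *\<^sub>R v | t. t \<ge> 0} \<noteq> range (\<lambda>y. (a20,b20) + y *\<^sub>R (2*a11, 2*b11))"
      by (rule half_line_ne_line[OF v])
    ultimately show False using S by simp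
  qed
  have "w1*(a11*b02 - b11*a02) = 0" "w2*(a11*b02 - b11*a02) = 0"
    using cross by algebra+
  then show "a11*b02 = b11*a02" using v coords by (auto simp: zero_prod_def)
qed

lemma curv_parabola_eq_half_line:
  assumes c: "(a02,b02) \<noteq> 0" and cross: "a11*b02 = b11*a02"
  shows "\<exists>x0. curv_parabola a20 a11 a02 b20 b11 b02 = {x0 + t *\<^sub>R sgn (a02,b02) | t. t \<ge> 0}"
proof -
  define N where "N = norm (a02,b02)"
  have N: "N > 0" using c by (simp add: N_def)
  define \<beta> where "\<beta> = (a11*a02 + b11*b02) / N^2"
  have "a11*N^2 = (a11*a02 + b11*b02)*a02" "b11*N^2 = (a11*a02 + b11*b02)*b02"
    using cross unfolding N_def norm_Pair by (simp_all add: power2_eq_square) algebra+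
  then have b: "a11 = \<beta>*a02" "b11 = \<beta>*b02" using N by (auto simp: \<beta>_def field_simps)
  define x0 where "x0 = (a20 - \<beta>^2*a02, b20 - \<beta>^2*b02)"
  have "curv_eta a20 a11 a02 b20 b11 b02 y = x0 + (y+\<beta>)^2 *\<^sub>R (a02,b02)" for y
    unfolding curv_eta_def x0_def b by (simp add: algebra_simps power2_eq_square)
  moreover have "(y+\<beta>)^2 *\<^sub>R (a02,b02) = ((y+\<beta>)^2 * N) *\<^sub>R sgn (a02,b02)" for y
    using N by (simp add: sgn_div_norm N_def)
  ultimately have eta: "curv_eta a20 a11 a02 b20 b11 b02
      = (\<lambda>t. x0 + t *\<^sub>R sgn (a02,b02)) \<circ> (\<lambda>y. (y+\<beta>)^2 * N)"
    by (simp add: fun_eq_iff)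
  have "range (\<lambda>y. (y+\<beta>)^2 * N) = {t. t \<ge> 0}"
  proof (intro set_eqI iffI)
    fix t :: real assume "t \<in> {t. t \<ge> 0}"
    then have "t = (sqrt (t/N) - \<beta> + \<beta>)^2 * N" using N by simp
    then show "t \<in> range (\<lambda>y. (y+\<beta>)^2 * N)" by blast
  qed (use N in auto)
  then have "curv_parabola a20 a11 a02 b20 b11 b02 = (\<lambda>t. x0 + t *\<^sub>R sgn (a02,b02)) ` {t. t \<ge> 0}"
    unfolding curv_parabola_def eta image_comp[symmetric] by simp
  then show ?thesis by blast
qed

lemma axial_vector_nondeg_curv_parabola:
  assumes "nondeg_parabola (curv_parabola a20 a11 a02 b20 b11 b02)"
  shows "(a02,b02) \<noteq> 0" and "axial_vector (curv_parabola a20 a11 a02 b20 b11 b02) = sgn (a02,b02)"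
proof -
  let ?S = "curv_parabola a20 a11 a02 b20 b11 b02"
  obtain F q d where P: "parabola_data ?S F q d"
    using assms by (auto simp: nondeg_parabola_def)
  note axis = curv_parabola_data_axis[OF P]
  then show c: "(a02,b02) \<noteq> 0" by auto
  have "(THE v. norm v = 1 \<and> (\<exists>F q d. parabola_data ?S F q d \<and> inner v d = 0 \<and> inner (F - q) v > 0))
        = sgn (a02,b02)"
  proof (rule the_equality)
    show "norm (sgn (a02,b02)) = 1 \<and> (\<exists>F q d. parabola_data ?S F q d
        \<and> inner (sgn (a02,b02)) d = 0 \<and> inner (F - q) (sgn (a02,b02)) > 0)"
    proof -
      have "inner (sgn (a02,b02)) d = 0" "inner (F - q) (sgn (a02,b02)) > 0"
        using axis c by (simp_all add: inner_sgn_right inner_commute)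
      moreover have "norm (sgn (a02,b02)) = 1" using c by (simp add: norm_sgn)
      ultimately show ?thesis using P by blast
    qed
  next
    fix v assume "norm v = 1 \<and> (\<exists>F q d. parabola_data ?S F q d \<and> inner v d = 0 \<and> inner (F - q) v > 0)"
    then obtain F' q' d' where P': "parabola_data ?S F' q' d'"
      and v: "norm v = 1" "inner v d' = 0" "inner (F' - q') v > 0"
      by blast
    have "d' \<noteq> 0" using P' by (simp add: parabola_data_def)
    with curv_parabola_data_axis[OF P'] v show "v = sgn (a02,b02)"
      by (intro orthogonal_unit_vector_eq_sgn[of d' v "(a02,b02)" "F' - q'"])
  qed
  then show "axial_vector ?S = sgn (a02,b02)" using assms by (simp add: axial_vector_def)
qed

lemma axial_vector_half_line_curv_parabola:
  assumes H: "half_line (curv_parabola a20 a11 a02 b20 b11 b02)"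
    and not_parabola: "\<not> nondeg_parabola (curv_parabola a20 a11 a02 b20 b11 b02)"
  shows "(a02,b02) \<noteq> 0" and "axial_vector (curv_parabola a20 a11 a02 b20 b11 b02) = sgn (a02,b02)"
proof -
  let ?S = "curv_parabola a20 a11 a02 b20 b11 b02"
  show c: "(a02,b02) \<noteq> 0" by (rule curv_parabola_half_line_coeffs(1)[OF H])
  obtain x0 where S: "?S = {x0 + t *\<^sub>R sgn (a02,b02) | t. t \<ge> 0}"
    using curv_parabola_eq_half_line[OF c curv_parabola_half_line_coeffs(2)[OF H], of a20 b20]
    by (elim exE)
  have unit: "norm (sgn (a02,b02)) = 1" using c by (simp add: norm_sgn)
  have "(THE v. norm v = 1 \<and> (\<exists>x0. ?S = {x0 + t *\<^sub>R v | t. t \<ge> 0})) = sgn (a02,b02)"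
  proof (rule the_equality)
    show "norm (sgn (a02,b02)) = 1 \<and> (\<exists>x0. ?S = {x0 + t *\<^sub>R sgn (a02,b02) | t. t \<ge> 0})"
      using unit S by (intro conjI exI)
  next
    fix v assume "norm v = 1 \<and> (\<exists>x0. ?S = {x0 + t *\<^sub>R v | t. t \<ge> 0})"
    then obtain x1 where v: "norm v = 1" and S': "?S = {x1 + t *\<^sub>R v | t. t \<ge> 0}"
      by (elim conjE exE)
    from trans[OF S[symmetric] S'] unit v show "v = sgn (a02,b02)"
      by (rule half_line_unit_direction_unique)
  qed
  then show "axial_vector ?S = sgn (a02,b02)"
    unfolding axial_vector_def by (simp only: not_parabola if_False)
qed

lemma axial_vector_curv_parabola:
  assumes "nondeg_parabola (curv_parabola a20 a11 a02 b20 b11 b02)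
           \<or> half_line (curv_parabola a20 a11 a02 b20 b11 b02)"
  shows "(a02,b02) \<noteq> 0" and "axial_vector (curv_parabola a20 a11 a02 b20 b11 b02) = sgn (a02,b02)"
  using assms axial_vector_nondeg_curv_parabola[of a20 a11 a02 b20 b11 b02]
    axial_vector_half_line_curv_parabola[of a20 a11 a02 b20 b11 b02] by blast+

theorem mainTheorem2:
  fixes a20 a11 a02 b20 b11 b02 :: real
  assumes "nondeg_parabola (curv_parabola a20 a11 a02 b20 b11 b02)
           \<or> half_line (curv_parabola a20 a11 a02 b20 b11 b02)"
  shows "axial_curvature a20 a11 a02 b20 b11 b02 =
           1 / sqrt (a02^2 + b02^2) *
           ((a20*a02 + b20*b02) - (a11*a02 + b11*b02)^2 / (a02^2 + b02^2))"
proof -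
  let ?S = "curv_parabola a20 a11 a02 b20 b11 b02"
  define A where "A = a20*a02 + b20*b02"
  define B where "B = a11*a02 + b11*b02"
  define K where "K = a02^2 + b02^2"
  have K: "K > 0"
    using axial_vector_curv_parabola(1)[OF assms]
    by (auto simp: K_def zero_prod_def sum_power2_gt_zero_iff)
  have "inner (curv_eta a20 a11 a02 b20 b11 b02 y) (a02,b02) = A + 2*B*y + K*y^2" for y
    by (simp add: curv_eta_def A_def B_def K_def algebra_simps power2_eq_square)
  moreover have "norm (a02,b02) = sqrt K" by (simp add: norm_Pair K_def)
  ultimately have "inner (curv_eta a20 a11 a02 b20 b11 b02 y) (axial_vector ?S)
      = (A + 2*B*y + K*y^2) / sqrt K" for y
    unfolding axial_vector_curv_parabola(2)[OF assms] inner_sgn_right by simp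
  then have "axial_curvature a20 a11 a02 b20 b11 b02 = (A - B^2/K) / sqrt K"
    unfolding axial_curvature_def Let_def using K by (simp only: the_min_quadratic real_sqrt_gt_zero)
  then show ?thesis by (simp add: A_def B_def K_def)
qed

end
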